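(* For every $x\ge0$, $$J_0(\sqrt2x)-2J_0(x)+1=\frac{2}{\pi}\int_0^{\pi/2}\bigl(1-\cos(x\cos t)\bigr)\bigl(1-\cos(x\sin t)\bigr)\,dt.$$ In particular $J_0(\sqrt2x)-2J_0(x)+1\ge0$ for all $x\ge0$. Consequently, for all $r,\theta_2,\sigma>0$, $\alpha\in(0,2)$, $b\in(0,1/2)$ and $\kappa,\eta\in\mathbb R$, the quantity $$g_{r,\alpha}(\vartheta)=\frac{\sigma^2\psi_{r,\alpha}(\theta_2)}{(1-2b)^2}\int_b^{1-b}\!\int_b^{1-b}e^{-\kappa y-\eta z}\,dy\,dz$$ is strictly positive.
   Context: $J_0$ denotes the Bessel function of the first kind of order $0$, i.e. $J_0(x)=\frac{2}{\pi}\int_0^{\pi/2}\cos(x\cos t)\,dt$. For $r,\alpha,\theta_2>0$, $$\psi_{r,\alpha}(\theta_2)=\frac{2}{\theta_2\pi}\int_0^\infty\frac{1-e^{-x^2}}{x^{1+2\alpha}}\Bigl(J_0\bigl(\tfrac{\sqrt2rx}{\sqrt{\theta_2}}\bigr)-2J_0\bigl(\tfrac{rx}{\sqrt{\theta_2}}\bigr)+1\Bigr)dx,$$ and $\vartheta=(\kappa,\eta,\theta_2,\sigma^2)$. *)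

theory Defs
  imports "HOL-Analysis.Analysis"
begin

definition J0 :: "real \<Rightarrow> real" where
  "J0 x = 2 / pi * integral {0..pi/2} (\<lambda>t. cos (x * cos t))"

definition psi :: "real \<Rightarrow> real \<Rightarrow> real \<Rightarrow> real" where
  "psi r \<alpha> \<theta>2 = 2 / (\<theta>2 * pi) *
     (LINT x:{0<..}|lborel. (1 - exp (- (x\<^sup>2))) / x powr (1 + 2 * \<alpha>) *
        (J0 (sqrt 2 * r * x / sqrt \<theta>2) - 2 * J0 (r * x / sqrt \<theta>2) + 1))"

text \<open>g_{r,alpha}(vartheta) with vartheta = (kappa, eta, theta2, sigma^2) and parameter b.\<close>
definition g :: "real \<Rightarrow> real \<Rightarrow> real \<Rightarrow> real \<times> real \<times> real \<times> real \<Rightarrow> real" where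
  "g r \<alpha> b \<theta>v = (case \<theta>v of (\<kappa>, \<eta>, \<theta>2, s2) \<Rightarrow>
     s2 * psi r \<alpha> \<theta>2 / (1 - 2 * b)\<^sup>2 *
     (LBINT z=b..(1 - b). (LBINT y=b..(1 - b). exp (- \<kappa> * y - \<eta> * z))))"

end

(*
  By product-to-sum, (1 - cos (x cos t)) (1 - cos (x sin t)) equals
  1 - cos (x cos t) - cos (x sin t) + (cos (x (cos t + sin t)) + cos (x (cos t - sin t))) / 2.
  Over [0, pi/2] the two middle terms each integrate to (pi/2) J0(x) (substitute t -> pi/2 - t),
  and since cos t +- sin t = sqrt 2 cos (t -+ pi/4), the last pair integrates to pi J0(sqrt 2 x),
  because s -> cos (sqrt 2 x cos s) is even and symmetric about pi/2.  This gives the identity,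
  and nonnegativity follows from it.

  For psi, 1 - cos a <= a^2/2 bounds the integrand by O(x^(5 - 2 alpha)) near 0, and it is
  O(x^(-1 - 2 alpha)) at infinity, so it is integrable for 0 < alpha < 2.  It is bounded below
  by a positive constant where r x / sqrt theta2 lies in [2, 3], since then both cosines of the
  identity stay below cos 1 for t in [pi/6, pi/3].  The double integral in g factors into two
  positive one-dimensional integrals.
*)

theory Submission
  imports Defs
begin

lemma integral_reflect_real_shift:
  "integral {a..b} (\<lambda>t. f (c - t)) = integral {c - b..c - a} (f :: real \<Rightarrow> real)"
proof -
  have "integral {a..b} (\<lambda>t. f (c - t)) = integral {-b..-a} (\<lambda>s. f (s + c))"
    using Henstock_Kurzweil_Integration.integral_reflect_real[of "-a" "-b" "\<lambda>s. f (s + c)"]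
    by (simp add: algebra_simps)
  also have "\<dots> = integral {c - b..c - a} f"
    using integral_shift_real_ivl[of "c - b" c "c - a" f] by simp
  finally show ?thesis .
qed

lemma integral_halves_eq_if_symmetric:
  fixes f :: "real \<Rightarrow> real"
  assumes "\<And>t. f (2 * c - t) = f t"
  shows "integral {c - h..c} f = integral {c..c + h} f"
proof -
  have "integral {c..c + h} f = integral {c..c + h} (\<lambda>t. f (2 * c - t))"
    by (simp add: assms)
  also have "\<dots> = integral {c - h..c} f"
    by (simp add: integral_reflect_real_shift)
  finally show ?thesis ..
qed

lemma has_integral_J0: "((\<lambda>t. cos (x * cos t)) has_integral pi / 2 * J0 x) {0..pi/2}"
  unfolding has_integral_integrable_integral J0_def
  by (intro conjI integrable_continuous_interval continuous_intros) simp

lemma has_integral_J0_sin: "((\<lambda>t. cos (x * sin t)) has_integral pi / 2 * J0 x) {0..pi/2}"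
proof -
  have "integral {0..pi/2} (\<lambda>t. cos (x * sin t))
      = integral {0..pi/2} (\<lambda>t. cos (x * cos (pi/2 - t)))"
    by (simp add: cos_diff)
  also have "\<dots> = pi / 2 * J0 x"
    using integral_reflect_real_shift[of 0 "pi/2" "\<lambda>s. cos (x * cos s)" "pi/2"]
    by (simp add: J0_def)
  finally show ?thesis
    unfolding has_integral_integrable_integral
    by (intro conjI integrable_continuous_interval continuous_intros)
qed

lemma has_integral_J0_sqrt2:
  "((\<lambda>t. cos (x * cos t + x * sin t) + cos (x * cos t - x * sin t))
     has_integral pi * J0 (sqrt 2 * x)) {0..pi/2}"
proof -
  define F where "F s = cos (sqrt 2 * x * cos s)" for s
  have int: "F integrable_on {a..b}" for a b
    unfolding F_def by (intro integrable_continuous_interval continuous_intros)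
  have plus: "cos (x * cos t + x * sin t) = F (t - pi/4)" for t
  proof -
    have "sqrt 2 * cos (t - pi/4) = cos t + sin t"
      by (simp add: cos_diff cos_45 sin_45 algebra_simps)
    then show ?thesis unfolding F_def by (metis distrib_left mult.assoc mult.commute)
  qed
  have minus: "cos (x * cos t - x * sin t) = F (t + pi/4)" for t
  proof -
    have "sqrt 2 * cos (t + pi/4) = cos t - sin t"
      by (simp add: cos_add cos_45 sin_45 algebra_simps)
    then show ?thesis unfolding F_def by (metis right_diff_distrib mult.assoc mult.commute)
  qed
  have even: "F (2 * 0 - t) = F t" and reflect: "F (2 * (pi/2) - t) = F t" for t
    by (simp_all add: F_def)
  have "integral {0..pi/2} (\<lambda>t. F (t - pi/4) + F (t + pi/4))
      = integral {0..pi/2} (\<lambda>t. F (t - pi/4)) + integral {0..pi/2} (\<lambda>t. F (t + pi/4))"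
    unfolding F_def by (intro integral_add integrable_continuous_interval continuous_intros)
  also have "\<dots> = integral {-pi/4..pi/4} F + integral {pi/4..3*pi/4} F"
    using integral_shift_real_ivl[of "-pi/4" "-pi/4" "pi/4" F]
      integral_shift_real_ivl[of "pi/4" "pi/4" "3*pi/4" F] by simp
  also have "\<dots> = (integral {-pi/4..0} F + integral {0..pi/4} F)
      + (integral {pi/4..pi/2} F + integral {pi/2..3*pi/4} F)"
    using Henstock_Kurzweil_Integration.integral_combine[OF _ _ int, of "-pi/4" 0 "pi/4"]
      Henstock_Kurzweil_Integration.integral_combine[OF _ _ int, of "pi/4" "pi/2" "3*pi/4"] by simp
  also have "\<dots> = 2 * (integral {0..pi/4} F + integral {pi/4..pi/2} F)"
    using integral_halves_eq_if_symmetric[of F 0 "pi/4", OF even]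
      integral_halves_eq_if_symmetric[of F "pi/2" "pi/4", OF reflect] by simp
  also have "\<dots> = 2 * integral {0..pi/2} F"
    using Henstock_Kurzweil_Integration.integral_combine[OF _ _ int, of 0 "pi/4" "pi/2"] by simp
  also have "\<dots> = pi * J0 (sqrt 2 * x)"
    by (simp add: J0_def F_def[abs_def] mult.assoc)
  finally show ?thesis
    unfolding plus minus has_integral_integrable_integral F_def
    by (intro conjI integrable_continuous_interval continuous_intros)
qed

definition J0_comb :: "real \<Rightarrow> real" where
  "J0_comb x = J0 (sqrt 2 * x) - 2 * J0 x + 1"

lemma has_integral_J0_comb:
  "((\<lambda>t. (1 - cos (x * cos t)) * (1 - cos (x * sin t))) has_integral pi / 2 * J0_comb x) {0..pi/2}"
proof -
  have product_to_sum: "(1 - cos (x * cos t)) * (1 - cos (x * sin t)) = 1 - cos (x * cos t)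
      - cos (x * sin t) + (cos (x * cos t + x * sin t) + cos (x * cos t - x * sin t)) / 2" for t
    by (simp add: cos_add cos_diff algebra_simps)
  have "((\<lambda>t. 1 - cos (x * cos t) - cos (x * sin t)
      + (cos (x * cos t + x * sin t) + cos (x * cos t - x * sin t)) / 2)
      has_integral pi / 2 - pi / 2 * J0 x - pi / 2 * J0 x + pi * J0 (sqrt 2 * x) / 2) {0..pi/2}"
    using has_integral_const_real[of "1::real" 0 "pi/2"]
    by (intro has_integral_add has_integral_diff has_integral_divide
        has_integral_J0 has_integral_J0_sin has_integral_J0_sqrt2) simp
  then show ?thesis
    unfolding product_to_sum J0_comb_def by (simp add: algebra_simps)
qed

lemma J0_comb_eq_integral:
  "J0_comb x = 2 / pi * integral {0..pi/2} (\<lambda>t. (1 - cos (x * cos t)) * (1 - cos (x * sin t)))"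
  using integral_unique[OF has_integral_J0_comb[of x]] by (simp add: field_simps)

lemma J0_comb_nonneg: "0 \<le> J0_comb x"
  using has_integral_nonneg[OF has_integral_J0_comb[of x]] pi_gt_zero
  by (simp add: zero_le_mult_iff)

lemma J0_comb_le:
  assumes "\<And>t. t \<in> {0..pi/2} \<Longrightarrow> (1 - cos (x * cos t)) * (1 - cos (x * sin t)) \<le> B"
  shows "J0_comb x \<le> B"
  using has_integral_le[OF has_integral_J0_comb has_integral_const_real assms] by simp

lemma one_minus_cos_le_square: "1 - cos a \<le> a\<^sup>2 / (2 :: real)"
proof -
  have "(sin (a/2))\<^sup>2 \<le> (a/2)\<^sup>2"
    using abs_sin_x_le_abs_x[of "a/2"] by (metis abs_ge_zero power2_abs power_mono)
  then show ?thesis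
    using cos_double_sin[of "a/2"] by (simp add: power_divide)
qed

lemma J0_comb_le_4: "J0_comb x \<le> 4"
proof (rule J0_comb_le)
  fix t
  have "1 - cos (x * cos t) \<le> 2" "1 - cos (x * sin t) \<le> 2"
    using cos_ge_minus_one[of "x * cos t"] cos_ge_minus_one[of "x * sin t"] by linarith+
  then show "(1 - cos (x * cos t)) * (1 - cos (x * sin t)) \<le> 4"
    using mult_mono[of "1 - cos (x * cos t)" 2 "1 - cos (x * sin t)" 2] by simp
qed

lemma J0_comb_le_fourth_power: "J0_comb x \<le> x ^ 4 / 4"
proof (rule J0_comb_le)
  fix t
  have "(x * cos t)\<^sup>2 \<le> x\<^sup>2"
    by (simp add: power_mult_distrib mult_left_le cos_squared_eq)
  moreover have "(x * sin t)\<^sup>2 \<le> x\<^sup>2"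
    by (simp add: power_mult_distrib mult_left_le sin_squared_eq)
  ultimately have "1 - cos (x * cos t) \<le> x\<^sup>2 / 2" "1 - cos (x * sin t) \<le> x\<^sup>2 / 2"
    using one_minus_cos_le_square[of "x * cos t"] one_minus_cos_le_square[of "x * sin t"] by simp_all
  then have "(1 - cos (x * cos t)) * (1 - cos (x * sin t)) \<le> (x\<^sup>2 / 2) * (x\<^sup>2 / 2)"
    by (intro mult_mono) auto
  then show "(1 - cos (x * cos t)) * (1 - cos (x * sin t)) \<le> x ^ 4 / 4"
    by (simp add: power2_eq_square power4_eq_xxxx)
qed

lemma J0_comb_lower_bound:
  assumes "2 \<le> x" "x \<le> 3"
  shows "(1 - cos 1)\<^sup>2 / 3 \<le> J0_comb x"
proof -
  define Q where "Q t = (1 - cos (x * cos t)) * (1 - cos (x * sin t))" for t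
  have Q_int: "Q integrable_on {a..b}" for a b
    unfolding Q_def by (intro integrable_continuous_interval continuous_intros)
  have Q_lower: "(1 - cos 1)\<^sup>2 \<le> Q t" if t: "t \<in> {pi/6..pi/3}" for t
  proof -
    have "cos (x * u) \<le> cos 1" if "1/2 \<le> u" "u \<le> 1" for u
    proof (rule cos_monotone_0_pi_le)
      show "1 \<le> x * u" using assms that mult_mono[of 2 x "1/2" u] by simp
      show "x * u \<le> pi" using assms that pi_gt3 mult_left_le[of u x] by linarith
    qed simp
    moreover have "1/2 \<le> cos t" "1/2 \<le> sin t"
      using t cos_monotone_0_pi_le[of t "pi/3"] sin_monotone_2pi_le[of "pi/6" t] cos_60 sin_30
      by auto
    ultimately have "cos (x * cos t) \<le> cos 1" "cos (x * sin t) \<le> cos 1"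
      by simp_all
    then show ?thesis
      unfolding Q_def power2_eq_square by (intro mult_mono) auto
  qed
  have "pi / 6 * (1 - cos 1)\<^sup>2 = integral {pi/6..pi/3} (\<lambda>_. (1 - cos 1)\<^sup>2)"
    by simp
  also have "\<dots> \<le> integral {pi/6..pi/3} Q"
    by (intro integral_le Q_int Q_lower) auto
  also have "\<dots> \<le> integral {0..pi/2} Q"
    by (intro integral_subset_le Q_int) (auto simp: Q_def)
  finally show ?thesis
    unfolding J0_comb_eq_integral Q_def[symmetric] by (simp add: field_simps)
qed

lemma continuous_on_J0: "continuous_on UNIV J0"
proof -
  have "continuous_on (UNIV \<times> cbox 0 (pi/2)) (\<lambda>(x, t). cos (x * cos t))"
    unfolding case_prod_beta by (intro continuous_intros)
  from integral_continuous_on_param[OF this] show ?thesis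
    unfolding J0_def[abs_def] by (intro continuous_intros) simp
qed

lemma borel_measurable_J0_comb[measurable]: "J0_comb \<in> borel_measurable borel"
  unfolding J0_comb_def[abs_def]
  by (intro borel_measurable_continuous_onI continuous_on_compose2[OF continuous_on_J0]
      continuous_intros) auto

lemma set_integrable_powr_decay:
  fixes f :: "real \<Rightarrow> real"
  assumes [measurable]: "f \<in> borel_measurable borel" and "1 < p"
    and "\<And>x. x \<in> {0<..1} \<Longrightarrow> \<bar>f x\<bar> \<le> C"
    and "\<And>x. 1 < x \<Longrightarrow> \<bar>f x\<bar> \<le> D * x powr (-p)"
  shows "set_integrable lborel {0<..} f"
proof -
  have "(\<lambda>x::real. x powr (-p)) integrable_on {1..}"
    using has_integral_powr_to_inf[of "-p" 1] assms(2) unfolding integrable_on_def by auto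
  then have "set_integrable lebesgue {1..} (\<lambda>x::real. x powr (-p))"
    by (intro nonnegative_absolutely_integrable_1) auto
  then have "set_integrable lborel {1..} (\<lambda>x::real. x powr (-p))"
    unfolding set_integrable_def by (subst (asm) integrable_completion) auto
  then have "set_integrable lborel {1<..} (\<lambda>x::real. x powr (-p))"
    by (rule set_integrable_subset) auto
  then have tail: "set_integrable lborel {1<..} f"
    by (rule set_integrable_bound[OF set_integrable_mult_right[of D]])
       (auto simp: set_borel_measurable_def intro!: AE_I2 order_trans[OF assms(4)])
  have head: "set_integrable lborel {0<..1} f"
    by (rule set_integrable_bound[of _ _ "\<lambda>_. C"],
        rule set_integrable_subset[OF borel_integrable_atLeastAtMost'[of 0 1]])
       (auto simp: set_borel_measurable_def intro!: AE_I2 order_trans[OF assms(3)])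
  have "{0<..1} \<union> {1<..} = {0::real<..}" by auto
  with set_integrable_Un[OF head tail] show ?thesis by simp
qed

lemma set_integral_pos_of_interval_lower_bound:
  fixes f :: "real \<Rightarrow> real"
  assumes f: "set_integrable lborel S f" and nonneg: "\<And>x. x \<in> S \<Longrightarrow> 0 \<le> f x"
    and "{a..b} \<subseteq> S" "a < b" "0 < m" and lower: "\<And>x. x \<in> {a..b} \<Longrightarrow> m \<le> f x"
  shows "0 < (LINT x:S|lborel. f x)"
proof -
  have "0 < m * (b - a)"
    using assms by simp
  also have "\<dots> = (LINT x:{a..b}|lborel. m)"
    using set_borel_integral_eq_integral(2)[OF borel_integrable_atLeastAtMost'[of a b "\<lambda>_. m"]] assms
    by simp
  also have "\<dots> \<le> (LINT x:{a..b}|lborel. f x)"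
    using set_integrable_subset[OF f _ \<open>{a..b} \<subseteq> S\<close>]
    by (intro set_integral_mono[OF borel_integrable_atLeastAtMost'] lower) auto
  also have "\<dots> \<le> (LINT x:S|lborel. f x)"
    unfolding set_lebesgue_integral_def
    using set_integrable_subset[OF f] f nonneg \<open>{a..b} \<subseteq> S\<close>
    by (intro integral_mono) (auto simp: set_integrable_def split: split_indicator)
  finally show ?thesis .
qed

lemma psi_integral_pos:
  fixes c p :: real
  assumes "0 < c" "1 < p" "p < 5"
  shows "0 < (LINT x:{0<..}|lborel. (1 - exp (- (x\<^sup>2))) / x powr p * J0_comb (c * x))"
proof -
  define f where "f x = (1 - exp (- (x\<^sup>2))) / x powr p * J0_comb (c * x)" for x
  have gauss: "0 \<le> 1 - exp (- (x\<^sup>2))" "1 - exp (- (x\<^sup>2)) \<le> x\<^sup>2"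
    "1 - exp (- (x\<^sup>2)) \<le> 1" for x :: real
    using exp_ge_add_one_self[of "- (x\<^sup>2)"] by auto
  have nonneg: "0 \<le> f x" for x
    unfolding f_def using gauss by (intro mult_nonneg_nonneg divide_nonneg_nonneg J0_comb_nonneg) auto
  have near_zero: "\<bar>f x\<bar> \<le> c ^ 4 / 4" if x: "x \<in> {0<..1}" for x
  proof -
    have "f x \<le> x\<^sup>2 / x powr p * ((c * x) ^ 4 / 4)"
      unfolding f_def using gauss[of x]
      by (intro mult_mono divide_right_mono J0_comb_le_fourth_power J0_comb_nonneg) auto
    also have "\<dots> = c ^ 4 / 4 * x powr (6 - p)"
      using x by (simp add: powr_diff powr_numeral power_mult_distrib field_simps)
    also have "\<dots> \<le> c ^ 4 / 4"
      using x assms by (intro mult_left_le powr_le1) auto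
    finally show ?thesis using nonneg[of x] by simp
  qed
  have tail: "\<bar>f x\<bar> \<le> 4 * x powr (-p)" if "1 < x" for x
  proof -
    have "f x \<le> 1 / x powr p * 4"
      unfolding f_def using that gauss[of x]
      by (intro mult_mono divide_right_mono J0_comb_le_4 J0_comb_nonneg) auto
    then show ?thesis using nonneg[of x] by (simp add: powr_minus divide_inverse)
  qed
  have integrable: "set_integrable lborel {0<..} f"
  proof (rule set_integrable_powr_decay[OF _ \<open>1 < p\<close> near_zero tail])
    show "f \<in> borel_measurable borel" unfolding f_def by measurable
  qed
  define a b where "a = 2 / c" and "b = 3 / c"
  have "0 < a" "a < b"
    using assms by (auto simp: a_def b_def field_simps)
  define m where "m = (1 - exp (- (a\<^sup>2))) / b powr p * ((1 - cos 1)\<^sup>2 / 3)"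
  have "cos (1::real) < 1"
    using cos_monotone_0_pi[of 0 1] pi_gt3 by simp
  then have "0 < m"
    unfolding m_def using \<open>0 < a\<close> \<open>a < b\<close> by (intro mult_pos_pos divide_pos_pos) auto
  have lower: "m \<le> f x" if x: "x \<in> {a..b}" for x
  proof -
    have "2 \<le> c * x" "c * x \<le> 3"
      using x assms by (auto simp: a_def b_def field_simps)
    then have "(1 - cos 1)\<^sup>2 / 3 \<le> J0_comb (c * x)"
      by (rule J0_comb_lower_bound)
    moreover have "1 - exp (- (a\<^sup>2)) \<le> 1 - exp (- (x\<^sup>2))"
      using x \<open>0 < a\<close> by (simp add: power_mono)
    moreover have "x powr p \<le> b powr p"
      using x \<open>0 < a\<close> assms by (intro powr_mono2) auto
    ultimately show ?thesis
      unfolding m_def f_def using x \<open>0 < a\<close> gauss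
      by (intro mult_mono frac_le) auto
  qed
  have "{a..b} \<subseteq> {0<..}"
    using \<open>0 < a\<close> by auto
  from set_integral_pos_of_interval_lower_bound[OF integrable nonneg this \<open>a < b\<close> \<open>0 < m\<close> lower]
  show ?thesis unfolding f_def .
qed

lemma psi_pos:
  assumes "0 < r" "0 < \<theta>2" "0 < \<alpha>" "\<alpha> < 2"
  shows "0 < psi r \<alpha> \<theta>2"
proof -
  have "J0 (sqrt 2 * r * x / sqrt \<theta>2) - 2 * J0 (r * x / sqrt \<theta>2) + 1 = J0_comb (r / sqrt \<theta>2 * x)"
    for x by (simp add: J0_comb_def mult.assoc)
  moreover have "0 < (LINT x:{0<..}|lborel.
      (1 - exp (- (x\<^sup>2))) / x powr (1 + 2 * \<alpha>) * J0_comb (r / sqrt \<theta>2 * x))"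
    using assms by (intro psi_integral_pos) auto
  ultimately show ?thesis
    unfolding psi_def using assms by simp
qed

lemma interval_integral_pos:
  fixes f :: "real \<Rightarrow> real"
  assumes "a < b" "continuous_on {a..b} f" "\<And>x. x \<in> {a..b} \<Longrightarrow> 0 < f x"
  shows "0 < (LBINT x=a..b. f x)"
proof -
  obtain x0 where "x0 \<in> {a..b}" "\<And>y. y \<in> {a..b} \<Longrightarrow> f x0 \<le> f y"
    using continuous_attains_inf[of "{a..b}" f] assms by auto
  with set_integral_pos_of_interval_lower_bound[OF borel_integrable_atLeastAtMost'[OF assms(2)],
      of a b "f x0"] assms
  show ?thesis by (simp add: interval_integral_Icc less_imp_le)
qed

lemma g_pos:
  assumes "0 < r" "0 < \<theta>2" "0 < \<alpha>" "\<alpha> < 2" "0 < b" "b < 1/2" "0 < s2"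
  shows "0 < g r \<alpha> b (\<kappa>, \<eta>, \<theta>2, s2)"
proof -
  have "exp (- \<kappa> * y - \<eta> * z) = exp (- \<kappa> * y) * exp (- \<eta> * z)" for y z
    by (simp add: exp_add[symmetric])
  then have "(LBINT z=b..1 - b. (LBINT y=b..1 - b. exp (- \<kappa> * y - \<eta> * z)))
      = (LBINT y=b..1 - b. exp (- \<kappa> * y)) * (LBINT z=b..1 - b. exp (- \<eta> * z))"
    by (simp only: interval_lebesgue_integral_mult_left interval_lebesgue_integral_mult_right)
  moreover have "0 < (LBINT y=b..1 - b. exp (- \<kappa> * y))" "0 < (LBINT z=b..1 - b. exp (- \<eta> * z))"
    using assms by (intro interval_integral_pos continuous_intros; simp)+
  ultimately show ?thesis
    unfolding g_def using assms psi_pos by simp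
qed

theorem mainTheorem6:
  shows "(\<forall>x::real. x \<ge> 0 \<longrightarrow>
            J0 (sqrt 2 * x) - 2 * J0 x + 1 =
            2 / pi * integral {0..pi/2} (\<lambda>t. (1 - cos (x * cos t)) * (1 - cos (x * sin t))))
       \<and> (\<forall>x::real. x \<ge> 0 \<longrightarrow> J0 (sqrt 2 * x) - 2 * J0 x + 1 \<ge> 0)
       \<and> (\<forall>r \<theta>2 \<sigma> \<alpha> b \<kappa> \<eta> :: real.
            r > 0 \<longrightarrow> \<theta>2 > 0 \<longrightarrow> \<sigma> > 0 \<longrightarrow> 0 < \<alpha> \<longrightarrow> \<alpha> < 2 \<longrightarrow>
            0 < b \<longrightarrow> b < 1/2 \<longrightarrow> g r \<alpha> b (\<kappa>, \<eta>, \<theta>2, \<sigma>\<^sup>2) > 0)"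
  using J0_comb_eq_integral J0_comb_nonneg g_pos
  by (auto simp: J0_comb_def)

end
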